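(* Let $l\ge-1$ and $n\ge1$ be integers and let $(h,a)\in S_l\cap S_{l+n}$. Define $L_{(l+1)}=\phi\big(H^{(l+1)}+\sum_{k=0}^{l}a_kH^{(l-k)}\big)$ and $L_{(l+n+1)}=\phi\big(H^{(l+n+1)}+\sum_{k=0}^{l+n}a_kH^{(l+n-k)}\big)$. Then $L_{(l+1)}$ and $L_{(l+n+1)}$ are monic purely differential operators of orders $l+1$ and $l+n+1$ respectively, and the Lax operator $\mathcal L=\phi(z)$ of $h$ satisfies $\mathcal L^n=L_{(l+1)}^{-1}\,L_{(l+n+1)}$. Thus $\phi(S'_{l,l+n})$, where $S'_{l,l+n}=\mu(S_l\cap S_{l+n})$, consists of KP Lax operators whose $n$-th power is a ratio $L_{(l+1)}^{-1}L_{(l+n+1)}$ of two such differential operators (the Dickey–Krichever rational submanifold $\mathcal K_{l+1,n}$).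
   Context: Let $x$ be a space variable; all coefficients below are functions of $x$, and a subscript $x$ denotes $\partial_x$. Let $M$ be the affine space of formal Laurent series $h(z)=z+\sum_{j\ge1}h_j z^{-j}$, $A$ the affine space of formal Laurent series $a(z)=z+\sum_{j\ge0}a_j z^{-j}$, and $N=M\times A$; $\mu(h,a)=h$. The Faà di Bruno iterates of $h$ are $h^{(0)}=1$, $h^{(j+1)}=(\partial_x+h)h^{(j)}=\partial_x h^{(j)}+h\,h^{(j)}$ for all $j\in\mathbb Z$; for $j<0$ they are obtained by solving these recursions backwards from $h^{(0)}=1$, and $\{h^{(j)}\}_{j\in\mathbb Z}$ is a basis (over functions of $x$) of the algebra $L$ of formal Laurent series $\sum_{j\ge -n}k_jz^{-j}$. For $j\ge0$, the KP current $H^{(j)}$ is the unique Laurent series of the form $H^{(j)}=h^{(j)}+\sum_{l=0}^{j-2}p^j_l[h]\,h^{(l)}$, with the $p^j_l[h]$ differential polynomials in the $h_i$, such that $H^{(j)}=z^j+O(z^{-1})$. The Lax map $\phi:L\to\Psi DO$ (pseudodifferential operators in $\partial_x$) is the linear map defined by $\phi(f\,h^{(j)})=f\,\partial_x^{\,j}$ for all $j\in\mathbb Z$ and all $z$-independent functions $f$; the KP Lax operator is $\mathcal L=\phi(z)$. For an integer $l\ge-1$, $S_l\subset N$ is the set of pairs $(h,a)$ satisfying $z^l a=H^{(l+1)}+\sum_{m=0}^{l}a_mH^{(l-m)}$ (empty sum for $l=-1$). *)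

theory Defs
  imports "HOL-Computational_Algebra.Formal_Laurent_Series"
begin

text \<open>Coefficients ("functions of x") form a commutative ring of characteristic 0
 equipped with a derivation D (playing the role of the x-derivative).\<close>

definition derivation :: "('a::comm_ring_1 \<Rightarrow> 'a) \<Rightarrow> bool" where
  "derivation D \<longleftrightarrow> (\<forall>x y. D (x + y) = D x + D y) \<and> (\<forall>x y. D (x * y) = D x * y + x * D y)"

text \<open>Formal Laurent series in z with finitely many positive powers of z are encoded as
 Laurent series in w = z^{-1} (type fls): the coefficient of z^k of f is fls_nth f (-k).\<close>

definition zvar :: "'a::{zero,one} fls" where
  "zvar = fls_X_inv"

definition zcoeff :: "'a::zero fls \<Rightarrow> int \<Rightarrow> 'a" where
  "zcoeff f k = fls_nth f (-k)"

definition zpow :: "int \<Rightarrow> 'a::{zero,one} fls" where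
  "zpow k = fls_X_intpow (-k)"

definition dx :: "('a::comm_ring_1 \<Rightarrow> 'a) \<Rightarrow> 'a fls \<Rightarrow> 'a fls" where
  "dx D f = Abs_fls (\<lambda>n. D (fls_nth f n))"

definition inM :: "'a::comm_ring_1 fls \<Rightarrow> bool" where
  "inM h \<longleftrightarrow> zcoeff h 1 = 1 \<and> zcoeff h 0 = 0 \<and> (\<forall>k>1. zcoeff h k = 0)"

definition inA :: "'a::comm_ring_1 fls \<Rightarrow> bool" where
  "inA a \<longleftrightarrow> zcoeff a 1 = 1 \<and> (\<forall>k>1. zcoeff a k = 0)"

definition fdb_step :: "('a::comm_ring_1 \<Rightarrow> 'a) \<Rightarrow> 'a fls \<Rightarrow> 'a fls \<Rightarrow> 'a fls" where
  "fdb_step D h g = dx D g + h * g"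

definition fdb_back :: "('a::comm_ring_1 \<Rightarrow> 'a) \<Rightarrow> 'a fls \<Rightarrow> 'a fls \<Rightarrow> 'a fls" where
  "fdb_back D h f = (THE g. fdb_step D h g = f)"

definition fdb :: "('a::comm_ring_1 \<Rightarrow> 'a) \<Rightarrow> 'a fls \<Rightarrow> int \<Rightarrow> 'a fls" where
  "fdb D h j = (if 0 \<le> j then (fdb_step D h ^^ nat j) 1 else (fdb_back D h ^^ nat (-j)) 1)"

definition kp_current :: "('a::comm_ring_1 \<Rightarrow> 'a) \<Rightarrow> 'a fls \<Rightarrow> nat \<Rightarrow> 'a fls" where
  "kp_current D h j = (THE H. (\<exists>p :: nat \<Rightarrow> 'a.
        H = fdb D h (int j) + (\<Sum>l = 0 ..< j - 1. fls_const (p l) * fdb D h (int l)))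
      \<and> zcoeff H (int j) = 1 \<and> (\<forall>k. 0 \<le> k \<and> k \<noteq> int j \<longrightarrow> zcoeff H k = 0))"

text \<open>Pseudodifferential operators \<Sum>_{k \<le> N} f_k d^k: stored as a Laurent series whose
 coefficient at index n is the coefficient of d^(-n).\<close>
declare [[typedef_overloaded]]
datatype 'a psido = PsiDO "'a fls"

definition pcoeff :: "'a::zero psido \<Rightarrow> int \<Rightarrow> 'a" where
  "pcoeff P k = (case P of PsiDO f \<Rightarrow> fls_nth f (-k))"

definition pdeg :: "'a::zero psido \<Rightarrow> int" where
  "pdeg P = (case P of PsiDO f \<Rightarrow> - fls_subdegree f)"

definition ibinom :: "int \<Rightarrow> nat \<Rightarrow> int" where
  "ibinom i m = (if 0 \<le> i then int (nat i choose m)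
                 else (-1) ^ m * int ((nat (-i) + m - 1) choose m))"

text \<open>Composition of pseudodifferential operators:
  (f d^i)(g d^j) = \<Sum>_{m\<ge>0} binom(i,m) f D^m(g) d^(i+j-m).\<close>
definition pmul :: "('a::comm_ring_1 \<Rightarrow> 'a) \<Rightarrow> 'a psido \<Rightarrow> 'a psido \<Rightarrow> 'a psido" where
  "pmul D P Q = PsiDO (Abs_fls (\<lambda>n. let k = -n in
     (\<Sum>i \<in> {k - pdeg Q .. pdeg P}. \<Sum>j \<in> {k - i .. pdeg Q}.
        pcoeff P i * of_int (ibinom i (nat (i + j - k))) * (D ^^ nat (i + j - k)) (pcoeff Q j))))"

definition pone :: "'a::{zero,one} psido" where
  "pone = PsiDO 1"

fun ppow :: "('a::comm_ring_1 \<Rightarrow> 'a) \<Rightarrow> 'a psido \<Rightarrow> nat \<Rightarrow> 'a psido" where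
  "ppow D P 0 = pone"
| "ppow D P (Suc m) = pmul D (ppow D P m) P"

definition pinv :: "('a::comm_ring_1 \<Rightarrow> 'a) \<Rightarrow> 'a psido \<Rightarrow> 'a psido" where
  "pinv D P = (THE Q. pmul D P Q = pone \<and> pmul D Q P = pone)"

definition monic_diff :: "'a::{zero,one} psido \<Rightarrow> int \<Rightarrow> bool" where
  "monic_diff P m \<longleftrightarrow> pcoeff P m = 1 \<and> (\<forall>k. (k < 0 \<or> m < k) \<longrightarrow> pcoeff P k = 0)"

text \<open>Lax map: \<phi>(\<Sum>_j c_j h^(j)) = \<Sum>_j c_j d^j.  lax_expand rebuilds the Laurent series
 \<Sum>_j c_j h^(j) from the operator \<Sum>_j c_j d^j (h^(j) = z^j + lower order).\<close>
definition lax_expand :: "('a::comm_ring_1 \<Rightarrow> 'a) \<Rightarrow> 'a fls \<Rightarrow> 'a psido \<Rightarrow> 'a fls" where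
  "lax_expand D h P = Abs_fls (\<lambda>n. \<Sum>j \<in> {-n .. pdeg P}. pcoeff P j * (fls_nth (fdb D h j) n))"

definition lax_map :: "('a::comm_ring_1 \<Rightarrow> 'a) \<Rightarrow> 'a fls \<Rightarrow> 'a fls \<Rightarrow> 'a psido" where
  "lax_map D h f = (THE P. lax_expand D h P = f)"

definition Sseries :: "('a::comm_ring_1 \<Rightarrow> 'a) \<Rightarrow> 'a fls \<Rightarrow> 'a fls \<Rightarrow> int \<Rightarrow> 'a fls" where
  "Sseries D h a l = kp_current D h (nat (l + 1))
     + (\<Sum>m \<in> {0 .. l}. fls_const (zcoeff a (-m)) * kp_current D h (nat (l - m)))"

definition inS :: "('a::comm_ring_1 \<Rightarrow> 'a) \<Rightarrow> int \<Rightarrow> 'a fls \<Rightarrow> 'a fls \<Rightarrow> bool" where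
  "inS D l h a \<longleftrightarrow> inM h \<and> inA a \<and> zpow l * a = Sseries D h a l"

end

theory Submission
  imports Defs
begin

unbundle fps_syntax

text \<open>Let a pseudodifferential operator act on Laurent series by letting \<open>\<partial>\<close> act as
  \<open>T = \<partial>\<^sub>x + h\<close>, so that \<open>f \<partial>\<^sup>j \<cdot> 1 = f h\<^sup>(\<^sup>j\<^sup>)\<close>; the Lax map \<open>\<phi>\<close> is then the inverse of
  \<open>P \<mapsto> P \<cdot> 1\<close>, and the action is compatible with composition, \<open>(P Q) \<cdot> g = P \<cdot> (Q \<cdot> g)\<close>.
  Both \<open>T\<close> and, more generally, every monic differential operator of order \<open>d\<close> shift the
  lowest power of \<open>z\<close> by exactly \<open>d\<close> and keep its coefficient; such triangular maps are
  bijective, so monic differential operators are invertible.  Since \<open>h\<close> has no \<open>z\<^sup>0\<close> term,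
  \<open>h\<^sup>(\<^sup>j\<^sup>)\<close> has no \<open>z\<^sup>j\<^sup>-\<^sup>1\<close> term, so \<open>\<phi>(H\<^sup>(\<^sup>j\<^sup>))\<close> is \<open>\<partial>\<^sup>j\<close> plus differential terms of order
  \<open>\<le> j - 2\<close>; hence \<open>L\<^sub>l\<^sub>+\<^sub>1\<close> and \<open>L\<^sub>l\<^sub>+\<^sub>n\<^sub>+\<^sub>1\<close> are monic differential.  Finally the action
  commutes with multiplication by powers of \<open>z\<close> and \<open>\<L>\<^sup>n \<cdot> 1 = z\<^sup>n\<close>, so the defining identities
  \<open>L\<^sub>l\<^sub>+\<^sub>1 \<cdot> 1 = z\<^sup>l a\<close> and \<open>L\<^sub>l\<^sub>+\<^sub>n\<^sub>+\<^sub>1 \<cdot> 1 = z\<^sup>l\<^sup>+\<^sup>n a\<close> of \<open>S\<^sub>l\<close> and \<open>S\<^sub>l\<^sub>+\<^sub>n\<close> give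
  \<open>(L\<^sub>l\<^sub>+\<^sub>1 \<L>\<^sup>n) \<cdot> 1 = L\<^sub>l\<^sub>+\<^sub>n\<^sub>+\<^sub>1 \<cdot> 1\<close>, that is \<open>L\<^sub>l\<^sub>+\<^sub>1 \<L>\<^sup>n = L\<^sub>l\<^sub>+\<^sub>n\<^sub>+\<^sub>1\<close>.\<close>

lemma derivation_add: "derivation D \<Longrightarrow> D (x + y) = D x + D y"
  by (simp add: derivation_def)

lemma derivation_mult: "derivation D \<Longrightarrow> D (x * y) = D x * y + x * D y"
  by (simp add: derivation_def)

lemma derivation_zero: "derivation D \<Longrightarrow> D 0 = 0"
  using derivation_add[of D 0 0] by simp

lemma derivation_one: "derivation D \<Longrightarrow> D 1 = 0"
  using derivation_mult[of D 1 1] by simp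

lemma derivation_uminus: "derivation D \<Longrightarrow> D (- x) = - D x"
  using derivation_add[of D x "- x"] derivation_zero[of D] by (simp add: eq_neg_iff_add_eq_0 add.commute)

lemma derivation_diff: "derivation D \<Longrightarrow> D (x - y) = D x - D y"
  using derivation_add[of D x "- y"] derivation_uminus[of D y] by simp

lemma derivation_sum: "derivation D \<Longrightarrow> D (\<Sum>i\<in>A. f i) = (\<Sum>i\<in>A. D (f i))"
  by (induction A rule: infinite_finite_induct) (auto simp: derivation_zero derivation_add)

lemma derivation_of_int: "derivation D \<Longrightarrow> D (of_int c) = 0"
  by (induction c rule: int_induct[where k = 0])
     (simp_all add: derivation_zero derivation_add derivation_diff derivation_one)

lemma derivation_of_int_mult: "derivation D \<Longrightarrow> D (of_int c * x) = of_int c * D x"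
  by (simp add: derivation_mult derivation_of_int)

section \<open>Triangular maps of Laurent series\<close>

definition triangular :: "('a::comm_ring_1 fls \<Rightarrow> 'a fls) \<Rightarrow> int \<Rightarrow> bool" where
  "triangular F s \<longleftrightarrow> (\<forall>f g. F (f + g) = F f + F g) \<and>
     (\<forall>f. f \<noteq> 0 \<longrightarrow> (\<forall>k < fls_subdegree f + s. F f $$ k = 0)
        \<and> F f $$ (fls_subdegree f + s) = f $$ fls_subdegree f)"

lemma triangular_add: "triangular F s \<Longrightarrow> F (f + g) = F f + F g"
  by (simp add: triangular_def)

lemma triangular_zero: "triangular F s \<Longrightarrow> F 0 = 0"
  using triangular_add[of F s 0 0] by simp

lemma triangular_diff: "triangular F s \<Longrightarrow> F (f - g) = F f - F g"
  using triangular_add[of F s "f - g" g] by simp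

lemma triangular_sum: "triangular F s \<Longrightarrow> F (\<Sum>i\<in>A. f i) = (\<Sum>i\<in>A. F (f i))"
  by (induction A rule: infinite_finite_induct) (auto simp: triangular_zero triangular_add)

lemma triangular_below: "triangular F s \<Longrightarrow> f \<noteq> 0 \<Longrightarrow> k < fls_subdegree f + s \<Longrightarrow> F f $$ k = 0"
  by (simp add: triangular_def)

lemma triangular_lead: "triangular F s \<Longrightarrow> f \<noteq> 0 \<Longrightarrow> F f $$ (fls_subdegree f + s) = f $$ fls_subdegree f"
  by (simp add: triangular_def)

lemma triangular_nonzero: "triangular F s \<Longrightarrow> f \<noteq> 0 \<Longrightarrow> F f \<noteq> 0"
  using triangular_lead[of F s f] by (metis fls_nonzeroI nth_fls_subdegree_nonzero)

lemma triangular_subdegree: "triangular F s \<Longrightarrow> f \<noteq> 0 \<Longrightarrow> fls_subdegree (F f) = fls_subdegree f + s"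
  by (rule fls_subdegree_eqI) (auto simp: triangular_lead triangular_below)

lemma triangular_vanishes_below:
  assumes "triangular F s" "\<forall>k<c. f $$ k = 0" "k < c + s"
  shows "F f $$ k = 0"
proof (cases "f = 0")
  case True
  then show ?thesis using assms(1) by (simp add: triangular_zero)
next
  case False
  then have "c \<le> fls_subdegree f" using assms(2) by (meson fls_subdegree_geI)
  then show ?thesis using triangular_below[OF assms(1) False] assms(3) by simp
qed

lemma triangular_agree:
  "triangular F s \<Longrightarrow> \<forall>k<c. f $$ k = g $$ k \<Longrightarrow> k < c + s \<Longrightarrow> F f $$ k = F g $$ k"
  using triangular_vanishes_below[of F s c "f - g" k] by (simp add: triangular_diff)

lemma triangular_inj: "triangular F s \<Longrightarrow> F f = F g \<Longrightarrow> f = g"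
  by (metis triangular_nonzero triangular_diff right_minus_eq)

lemma triangular_id: "triangular (\<lambda>f. f) 0"
  by (simp add: triangular_def)

lemma triangular_comp:
  assumes F: "triangular F s" and G: "triangular G t"
  shows "triangular (\<lambda>f. F (G f)) (s + t)"
  unfolding triangular_def
proof (intro conjI allI impI)
  fix f g
  show "F (G (f + g)) = F (G f) + F (G g)" using F G by (simp add: triangular_add)
next
  fix f :: "'a fls" assume f: "f \<noteq> 0"
  have Gf: "G f \<noteq> 0" "fls_subdegree (G f) = fls_subdegree f + t"
    using triangular_nonzero[OF G f] triangular_subdegree[OF G f] by auto
  show "F (G f) $$ k = 0" if "k < fls_subdegree f + (s + t)" for k
    using triangular_below[OF F Gf(1)] Gf(2) that by (simp add: ac_simps)
  show "F (G f) $$ (fls_subdegree f + (s + t)) = f $$ fls_subdegree f"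
    using triangular_lead[OF F Gf(1)] Gf(2) triangular_lead[OF G f] by (simp add: ac_simps)
qed

lemma triangular_funpow: "triangular F s \<Longrightarrow> triangular (F ^^ k) (int k * s)"
proof (induction k)
  case 0
  then show ?case using triangular_id by (simp add: id_def)
next
  case (Suc k)
  then have "triangular (\<lambda>f. F ((F ^^ k) f)) (s + int k * s)" by (intro triangular_comp)
  then show ?case by (simp add: algebra_simps comp_def)
qed

lemma triangular_inverse:
  assumes F: "triangular F s" and FG: "\<And>y. F (G y) = y"
  shows "triangular G (- s)"
  unfolding triangular_def
proof (intro conjI allI impI)
  fix f g
  have "F (G (f + g)) = F (G f + G g)" using F FG by (simp add: triangular_add)
  then show "G (f + g) = G f + G g" using triangular_inj[OF F] by blast
next
  fix f :: "'a fls" assume f: "f \<noteq> 0"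
  then have Gf: "G f \<noteq> 0" using F FG by (metis triangular_zero)
  have sd: "fls_subdegree f = fls_subdegree (G f) + s"
    using triangular_subdegree[OF F Gf] FG by simp
  show "G f $$ k = 0" if "k < fls_subdegree f + - s" for k using sd that by simp
  show "G f $$ (fls_subdegree f + - s) = f $$ fls_subdegree f"
    using triangular_lead[OF F Gf] FG sd by simp
qed

lemma triangular_monomial:
  assumes "triangular F s" "i \<le> m + s"
  shows "F (fls_shift (- m) (fls_const c)) $$ i = (if i = m + s then c else 0)"
proof (cases "c = 0")
  case True
  then show ?thesis using assms(1) by (simp add: triangular_zero)
next
  case False
  let ?x = "fls_shift (- m) (fls_const c)"
  have "?x \<noteq> 0" "fls_subdegree ?x = m" using False by (simp_all add: fls_shift_eq0_iff)
  then show ?thesis using triangular_below[OF assms(1)] triangular_lead[OF assms(1)] assms(2)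
    by fastforce
qed

text \<open>Successive approximation of a preimage of \<open>y\<close>: step \<open>k\<close> corrects the
  residual \<open>y - F g\<close> at index \<open>N + k + s\<close> by a monomial of index \<open>N + k\<close>.\<close>

primrec triangular_approx ::
  "('a::comm_ring_1 fls \<Rightarrow> 'a fls) \<Rightarrow> 'a fls \<Rightarrow> int \<Rightarrow> int \<Rightarrow> nat \<Rightarrow> 'a fls" where
  "triangular_approx F y N s 0 = 0"
| "triangular_approx F y N s (Suc k) = triangular_approx F y N s k
     + fls_shift (- (N + int k)) (fls_const ((y - F (triangular_approx F y N s k)) $$ (N + int k + s)))"

lemma triangular_approx_residual:
  assumes F: "triangular F s" and y: "\<forall>i < N + s. y $$ i = 0"
  shows "\<forall>i < N + int k + s. (y - F (triangular_approx F y N s k)) $$ i = 0"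
proof (induction k)
  case 0
  then show ?case using y by (simp add: triangular_zero[OF F])
next
  case (Suc k)
  let ?g = "triangular_approx F y N s k"
  define c where "c = (y - F ?g) $$ (N + int k + s)"
  have step: "y - F (triangular_approx F y N s (Suc k))
      = (y - F ?g) - F (fls_shift (- (N + int k)) (fls_const c))"
    by (simp add: triangular_add[OF F] c_def)
  show ?case
  proof (intro allI impI)
    fix i assume i: "i < N + int (Suc k) + s"
    have "F (fls_shift (- (N + int k)) (fls_const c)) $$ i = (if i = N + int k + s then c else 0)"
      using triangular_monomial[OF F, of i "N + int k" c] i by simp
    then show "(y - F (triangular_approx F y N s (Suc k))) $$ i = 0"
      unfolding step using Suc i c_def
      by (auto simp del: fls_minus_nth simp: fls_minus_nth[of "y - _"])
  qed
qed

lemma triangular_approx_stable: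
  "i < N + int k \<Longrightarrow> triangular_approx F y N s (k + j) $$ i = triangular_approx F y N s k $$ i"
  by (induction j) auto

lemma triangular_approx_below: "i < N \<Longrightarrow> triangular_approx F y N s k $$ i = 0"
  by (induction k) auto

lemma triangular_surj:
  assumes F: "triangular F s"
  shows "\<exists>g. F g = y"
proof -
  define N where "N = fls_subdegree y - s"
  let ?g = "triangular_approx F y N s"
  define g where "g = Abs_fls (\<lambda>i. ?g (nat (i - N) + 1) $$ i)"
  have g_nth: "g $$ i = ?g (nat (i - N) + 1) $$ i" for i
    unfolding g_def by (rule nth_Abs_fls_lower_bound[where N = N]) (simp add: triangular_approx_below)
  have g_approx: "\<forall>i < N + int k. g $$ i = ?g k $$ i" for k
  proof (intro allI impI)
    fix i assume i: "i < N + int k"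
    show "g $$ i = ?g k $$ i"
    proof (cases "i < N")
      case True
      then show ?thesis by (simp add: g_nth triangular_approx_below)
    next
      case False
      then have "nat (i - N) + 1 \<le> k" using i by linarith
      then obtain j where "k = nat (i - N) + 1 + j" using le_Suc_ex by blast
      then show ?thesis using triangular_approx_stable[of i N "nat (i - N) + 1" F y s j] False g_nth
        by simp
    qed
  qed
  have "F g $$ i = y $$ i" for i
  proof -
    define k where "k = nat (i - N - s) + 1"
    have ik: "i < N + int k + s" using k_def by simp
    have "F g $$ i = F (?g k) $$ i" using triangular_agree[OF F g_approx ik] .
    then show ?thesis
      using triangular_approx_residual[OF F, where y = y and N = N and k = k] ik by (simp add: N_def)
  qed
  then show ?thesis by (blast intro: fls_eqI)
qed

section \<open>The operator \<open>\<partial>\<^sub>x + h\<close> and its integer powers\<close>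

locale kp_lax =
  fixes D :: "'a::comm_ring_1 \<Rightarrow> 'a" and h :: "'a fls"
  assumes derivation: "derivation D" and h_in_M: "inM h"
begin

lemma h_nth_minus_one: "h $$ (- 1) = 1"
  and h_nth_zero: "h $$ 0 = 0"
  and h_nth_below: "k < - 1 \<Longrightarrow> h $$ k = 0"
  using h_in_M unfolding inM_def zcoeff_def by (auto dest: spec[of _ "- k"])

lemma h_subdegree: "fls_subdegree h = - 1"
  by (rule fls_subdegree_eqI) (auto simp: h_nth_minus_one h_nth_below)

lemma dx_nth: "dx D g $$ n = D (g $$ n)"
proof -
  obtain N where "\<forall>n<N. g $$ n = 0" by (elim fls_nth_vanishes_belowE)
  then show ?thesis unfolding dx_def
    by (intro nth_Abs_fls_lower_bound[where N = N]) (simp add: derivation_zero[OF derivation])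
qed

lemma dx_add: "dx D (f + g) = dx D f + dx D g"
  by (rule fls_eqI) (simp add: dx_nth derivation_add[OF derivation])

lemma dx_const_mult: "dx D (fls_const c * g) = fls_const (D c) * g + fls_const c * dx D g"
  by (rule fls_eqI) (simp add: dx_nth derivation_mult[OF derivation])

lemma dx_shift: "dx D (fls_shift m g) = fls_shift m (dx D g)"
  by (rule fls_eqI) (simp add: dx_nth)

abbreviation T :: "'a fls \<Rightarrow> 'a fls" where
  "T \<equiv> fdb_step D h"

lemma T_nth: "T f $$ n = D (f $$ n) + (h * f) $$ n"
  by (simp add: fdb_step_def dx_nth)

lemma triangular_T: "triangular T (- 1)"
  unfolding triangular_def
proof (intro conjI allI impI)
  fix f g
  show "T (f + g) = T f + T g" by (simp add: fdb_step_def dx_add algebra_simps)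
next
  fix f :: "'a fls" assume "f \<noteq> 0"
  show "T f $$ k = 0" if "k < fls_subdegree f + - 1" for k
    using that fls_times_nth_eq0[of k h f] h_subdegree by (simp add: T_nth derivation_zero[OF derivation])
  have "(h * f) $$ (fls_subdegree h + fls_subdegree f) = f $$ fls_subdegree f"
    using fls_times_base[of h f] h_subdegree h_nth_minus_one by simp
  then show "T f $$ (fls_subdegree f + - 1) = f $$ fls_subdegree f"
    using h_subdegree by (simp add: T_nth derivation_zero[OF derivation] add.commute)
qed

lemma T_inj: "T f = T g \<Longrightarrow> f = g"
  using triangular_inj[OF triangular_T] .

lemma T_const_mult: "T (fls_const c * g) = fls_const (D c) * g + fls_const c * T g"
  by (simp add: fdb_step_def dx_const_mult distrib_left mult.left_commute add.assoc)

lemma T_shift: "T (fls_shift m g) = fls_shift m (T g)"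
  by (simp add: fdb_step_def dx_shift fls_shifted_times_simps(1))

abbreviation Tinv :: "'a fls \<Rightarrow> 'a fls" where
  "Tinv \<equiv> fdb_back D h"

lemma T_Tinv: "T (Tinv y) = y"
proof -
  have "\<exists>!g. T g = y"
    using triangular_surj[OF triangular_T] triangular_inj[OF triangular_T] by blast
  then show ?thesis unfolding fdb_back_def by (rule theI')
qed

lemma triangular_Tinv: "triangular Tinv 1"
  using triangular_inverse[OF triangular_T T_Tinv] by simp

definition Tpow :: "int \<Rightarrow> 'a fls \<Rightarrow> 'a fls" where
  "Tpow i = (if 0 \<le> i then T ^^ nat i else Tinv ^^ nat (- i))"

lemma fdb_eq_Tpow: "fdb D h j = Tpow j 1"
  by (simp add: fdb_def Tpow_def)

lemma triangular_Tpow: "triangular (Tpow i) (- i)"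
  using triangular_funpow[OF triangular_T, of "nat i"] triangular_funpow[OF triangular_Tinv, of "nat (- i)"]
  by (cases "0 \<le> i") (simp_all add: Tpow_def)

lemma Tpow_0 [simp]: "Tpow 0 g = g"
  by (simp add: Tpow_def)

lemma Tpow_succ: "Tpow (i + 1) g = T (Tpow i g)"
proof -
  consider "0 \<le> i" | "i = - 1" | "i < - 1" by linarith
  then show ?thesis
  proof cases
    case 1
    then have "nat (i + 1) = Suc (nat i)" by simp
    then show ?thesis using 1 by (simp add: Tpow_def)
  next
    case 2
    then show ?thesis by (simp add: Tpow_def T_Tinv)
  next
    case 3
    then have "nat (- i) = Suc (nat (- (i + 1)))" by simp
    then have "Tpow i g = Tinv (Tpow (i + 1) g)" using 3 by (simp add: Tpow_def)
    then show ?thesis by (simp add: T_Tinv)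
  qed
qed

lemma T_orbit_unique:
  fixes P Q :: "int \<Rightarrow> 'a fls"
  assumes "\<And>i. P (i + 1) = T (P i) \<and> Q (i + 1) = T (Q i)" and "P 0 = Q 0"
  shows "P i = Q i"
proof (induction i rule: int_induct[where k = 0])
  case (step2 i)
  then have "T (P (i - 1)) = T (Q (i - 1))" using assms(1)[of "i - 1"] by (metis diff_add_cancel)
  then show ?case by (rule T_inj)
qed (use assms in auto)

lemma Tpow_add: "Tpow i (f + g) = Tpow i f + Tpow i g"
  using triangular_add[OF triangular_Tpow] .

lemma Tpow_vanishes_below: "\<forall>k<c. x $$ k = 0 \<Longrightarrow> k < c - i \<Longrightarrow> Tpow i x $$ k = 0"
  using triangular_vanishes_below[OF triangular_Tpow, of c x k i] by simp

lemma Tpow_vanishes_below_subdegree: "k < fls_subdegree x - i \<Longrightarrow> Tpow i x $$ k = 0"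
  by (rule Tpow_vanishes_below[of "fls_subdegree x"]) auto

lemma Tpow_shift: "Tpow i (fls_shift m g) = fls_shift m (Tpow i g)"
  by (rule T_orbit_unique[where P = "\<lambda>i. Tpow i (fls_shift m g)"]) (simp_all add: Tpow_succ T_shift)

lemma Tpow_one_lead: "Tpow i 1 $$ (- i) = 1"
  using triangular_lead[OF triangular_Tpow, of 1 i] by simp

lemma Tpow_one_below: "k < - i \<Longrightarrow> Tpow i 1 $$ k = 0"
  using triangular_below[OF triangular_Tpow, of 1 k i] by simp

lemma Tpow_one_subdegree: "fls_subdegree (Tpow i 1) = - i"
  using triangular_subdegree[OF triangular_Tpow, of 1 i] by simp

lemma Tpow_one_subleading: "Tpow (int j) 1 $$ (1 - int j) = 0"
proof (induction j)
  case (Suc j)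
  define f where "f = Tpow (int j) 1"
  have "{- 1..0 :: int} = {- 1, 0}" by auto
  then have "(h * f) $$ (- int j) = (\<Sum>i\<in>{- 1, 0}. h $$ i * f $$ (- int j - i))"
    using fls_times_nth(2)[of h f "- int j"] h_subdegree Tpow_one_subdegree[of "int j"]
    by (simp add: f_def)
  also have "\<dots> = 0" using Suc.IH by (simp add: f_def h_nth_zero h_nth_minus_one)
  finally have "(h * f) $$ (- int j) = 0" .
  then have "T f $$ (- int j) = 0"
    using Tpow_one_lead[of "int j"] by (simp add: T_nth f_def derivation_one[OF derivation])
  then show ?case using Tpow_succ[of "int j" 1] by (simp add: f_def add.commute)
qed simp

end

section \<open>Pseudodifferential operators acting on Laurent series\<close>

lemma pcoeff_PsiDO [simp]: "pcoeff (PsiDO p) k = p $$ (- k)"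
  by (simp add: pcoeff_def)

lemma pdeg_PsiDO [simp]: "pdeg (PsiDO p) = - fls_subdegree p"
  by (simp add: pdeg_def)

lemma pcoeff_above_pdeg: "pdeg P < j \<Longrightarrow> pcoeff P j = 0"
  by (cases P) simp

lemma psido_eqI: "(\<And>k. pcoeff P k = pcoeff Q k) \<Longrightarrow> P = Q"
proof (cases P, cases Q)
  fix p q assume eq: "\<And>k. pcoeff P k = pcoeff Q k" and "P = PsiDO p" "Q = PsiDO q"
  moreover have "p = q"
  proof (rule fls_eqI)
    fix n show "p $$ n = q $$ n" using eq[of "- n"] \<open>P = PsiDO p\<close> \<open>Q = PsiDO q\<close> by simp
  qed
  ultimately show "P = Q" by simp
qed

lemma pcoeff_pone: "pcoeff pone j = (if j = 0 then 1 else 0)"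
  by (simp add: pone_def)

lemma ibinom_0_right [simp]: "ibinom i 0 = 1"
  by (simp add: ibinom_def)

lemma ibinom_0_left: "ibinom 0 m = (if m = 0 then 1 else 0)"
  by (simp add: ibinom_def)

lemma ibinom_Suc_Suc: "ibinom (i + 1) (Suc m) = ibinom i m + ibinom i (Suc m)"
proof -
  consider "0 \<le> i" | "i = - 1" | "i \<le> - 2" by linarith
  then show ?thesis
  proof cases
    case 1
    then have "nat (i + 1) = Suc (nat i)" by simp
    then show ?thesis using 1 by (simp add: ibinom_def)
  next
    case 2
    then show ?thesis by (simp add: ibinom_def)
  next
    case 3
    define M where "M = nat (- i) - 2"
    have "nat (- i) = Suc (Suc M)" "nat (- (i + 1)) = Suc M" "\<not> 0 \<le> i + 1" "\<not> 0 \<le> i"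
      using 3 by (auto simp: M_def)
    then have "ibinom (i + 1) (Suc m) = (- 1) ^ Suc m * int (Suc M + m choose Suc m)"
      and "ibinom i m = (- 1) ^ m * int (Suc M + m choose m)"
      and "ibinom i (Suc m) = (- 1) ^ Suc m * int (Suc (Suc M + m) choose Suc m)"
      by (simp_all add: ibinom_def)
    then show ?thesis by (simp add: algebra_simps)
  qed
qed

lemma sum_int_interval_shift: "(\<Sum>j\<in>{a..b::int}. f (j - 1)) = (\<Sum>j\<in>{a - 1..b - 1}. f j)"
  by (rule sum.reindex_bij_witness[of _ "\<lambda>j. j + 1" "\<lambda>j. j - 1"]) auto

context kp_lax
begin

definition act :: "'a psido \<Rightarrow> 'a fls \<Rightarrow> 'a fls" where
  "act P g = Abs_fls (\<lambda>n. \<Sum>j\<in>{fls_subdegree g - n .. pdeg P}. pcoeff P j * Tpow j g $$ n)"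

lemma act_nth: "act P g $$ n = (\<Sum>j\<in>{fls_subdegree g - n .. pdeg P}. pcoeff P j * Tpow j g $$ n)"
  unfolding act_def by (rule nth_Abs_fls_lower_bound[where N = "fls_subdegree g - pdeg P"]) auto

lemma lax_expand_eq_act: "lax_expand D h P = act P 1"
  by (simp add: lax_expand_def act_def fdb_eq_Tpow)

lemma act_nth_sum:
  assumes "finite J" "\<And>j. j \<notin> J \<Longrightarrow> pcoeff P j * Tpow j g $$ n = 0"
  shows "act P g $$ n = (\<Sum>j\<in>J. pcoeff P j * Tpow j g $$ n)"
proof -
  let ?J = "{fls_subdegree g - n .. pdeg P}"
  let ?f = "\<lambda>j. pcoeff P j * Tpow j g $$ n"
  have "\<forall>j. j \<notin> ?J \<longrightarrow> ?f j = 0"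
    by (auto simp: pcoeff_above_pdeg Tpow_vanishes_below_subdegree)
  then have "sum ?f ?J = sum ?f (?J \<union> J)"
    by (intro sum.mono_neutral_left) (use assms in auto)
  also have "\<dots> = sum ?f J"
    by (intro sum.mono_neutral_right) (use assms in auto)
  finally show ?thesis by (simp add: act_nth)
qed

lemma act_nth_interval:
  assumes "a \<le> fls_subdegree g - n" "\<And>j. b < j \<Longrightarrow> pcoeff P j = 0"
  shows "act P g $$ n = (\<Sum>j\<in>{a..b}. pcoeff P j * Tpow j g $$ n)"
proof (rule act_nth_sum)
  fix j assume "j \<notin> {a..b}"
  then consider "j < a" | "b < j" by fastforce
  then show "pcoeff P j * Tpow j g $$ n = 0"
    by cases (use assms Tpow_vanishes_below_subdegree[of n g j] in auto)
qed simp

lemma act_vanishes_below: "k < fls_subdegree g - pdeg P \<Longrightarrow> act P g $$ k = 0"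
  by (simp add: act_nth)

lemma act_add: "act P (f + g) = act P f + act P g"
proof (rule fls_eqI)
  fix n
  define m where "m = min (fls_subdegree f) (fls_subdegree g)"
  let ?J = "{m - n .. pdeg P}"
  have vanish: "pcoeff P j * Tpow j x $$ n = 0" if "j \<notin> ?J" "\<forall>k<m. x $$ k = 0" for j x
    using that Tpow_vanishes_below[of m x n j] pcoeff_above_pdeg[of P j] by auto
  have "\<forall>k<m. f $$ k = 0" "\<forall>k<m. g $$ k = 0" "\<forall>k<m. (f + g) $$ k = 0"
    by (auto simp: m_def)
  then have "act P x $$ n = (\<Sum>j\<in>?J. pcoeff P j * Tpow j x $$ n)" if "x \<in> {f, g, f + g}" for x
    using that by (auto intro!: act_nth_sum vanish)
  then show "act P (f + g) $$ n = (act P f + act P g) $$ n"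
    by (simp add: Tpow_add distrib_left sum.distrib)
qed

lemma act_PsiDO_add: "act (PsiDO (p + q)) g = act (PsiDO p) g + act (PsiDO q) g"
proof (rule fls_eqI)
  fix n
  define b where "b = max (max (pdeg (PsiDO p)) (pdeg (PsiDO q))) (pdeg (PsiDO (p + q)))"
  have "act (PsiDO x) g $$ n = (\<Sum>j\<in>{fls_subdegree g - n .. b}. pcoeff (PsiDO x) j * Tpow j g $$ n)"
    if "x \<in> {p, q, p + q}" for x
    using that by (intro act_nth_interval) (auto simp: b_def intro!: pcoeff_above_pdeg simp del: pdeg_PsiDO pcoeff_PsiDO)
  then show "act (PsiDO (p + q)) g $$ n = (act (PsiDO p) g + act (PsiDO q) g) $$ n"
    by (simp add: distrib_right sum.distrib)
qed

lemma act_PsiDO_const_mult: "act (PsiDO (fls_const c * p)) g = fls_const c * act (PsiDO p) g"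
proof (rule fls_eqI)
  fix n
  define b where "b = max (pdeg (PsiDO p)) (pdeg (PsiDO (fls_const c * p)))"
  have "act (PsiDO x) g $$ n = (\<Sum>j\<in>{fls_subdegree g - n .. b}. pcoeff (PsiDO x) j * Tpow j g $$ n)"
    if "x \<in> {p, fls_const c * p}" for x
    using that by (intro act_nth_interval) (auto simp: b_def intro!: pcoeff_above_pdeg simp del: pdeg_PsiDO pcoeff_PsiDO)
  then show "act (PsiDO (fls_const c * p)) g $$ n = (fls_const c * act (PsiDO p) g) $$ n"
    by (simp add: sum_distrib_left mult.assoc)
qed

lemma act_PsiDO_sum: "act (PsiDO (\<Sum>m\<in>M. f m)) g = (\<Sum>m\<in>M. act (PsiDO (f m)) g)"
  using act_PsiDO_add[of 0 0 g]
  by (induction M rule: infinite_finite_induct) (simp_all add: act_PsiDO_add)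

lemma act_shift: "act P (fls_shift m g) = fls_shift m (act P g)"
proof (rule fls_eqI)
  fix n
  have "act P (fls_shift m g) $$ n
      = (\<Sum>j\<in>{fls_subdegree g - (n + m) .. pdeg P}. pcoeff P j * Tpow j g $$ (n + m))"
    by (subst act_nth_sum) (auto simp: Tpow_shift pcoeff_above_pdeg Tpow_vanishes_below_subdegree)
  then show "act P (fls_shift m g) $$ n = fls_shift m (act P g) $$ n" by (simp add: act_nth)
qed

lemma act_pone: "act pone g = g"
proof (rule fls_eqI)
  fix n
  have "act pone g $$ n = (\<Sum>j\<in>{0}. pcoeff pone j * Tpow j g $$ n)"
    by (rule act_nth_sum) (auto simp: pcoeff_pone)
  then show "act pone g $$ n = g $$ n" by (simp add: pcoeff_pone)
qed

end

section \<open>Composition of operators is compatible with the action\<close>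

context kp_lax
begin

definition d_mul :: "'a psido \<Rightarrow> 'a psido" where
  "d_mul R = PsiDO (Abs_fls (\<lambda>n. D (pcoeff R (- n)) + pcoeff R (- n - 1)))"

lemma pcoeff_d_mul: "pcoeff (d_mul R) j = D (pcoeff R j) + pcoeff R (j - 1)"
proof -
  have "Abs_fls (\<lambda>n. D (pcoeff R (- n)) + pcoeff R (- n - 1)) $$ (- j)
      = D (pcoeff R (- (- j))) + pcoeff R (- (- j) - 1)"
    by (rule nth_Abs_fls_lower_bound[where N = "- pdeg R - 1"])
       (auto simp: pcoeff_above_pdeg derivation_zero[OF derivation])
  then show ?thesis by (simp add: d_mul_def)
qed

lemma T_act: "T (act R g) = act (d_mul R) g"
proof (rule fls_eqI)
  fix n
  define a where "a = fls_subdegree g - n - 2"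
  define b where "b = pdeg R + 1"
  let ?X = "\<lambda>j. Tpow j g $$ n"
  define S where "S = (\<Sum>j\<in>{a..b}. fls_const (pcoeff R j) * Tpow j g)"
  have "\<forall>k < n + 2. act R g $$ k = S $$ k"
  proof (intro allI impI)
    fix k assume "k < n + 2"
    then have "act R g $$ k = (\<Sum>j\<in>{a..b}. pcoeff R j * Tpow j g $$ k)"
      by (intro act_nth_interval) (auto simp: a_def b_def pcoeff_above_pdeg)
    then show "act R g $$ k = S $$ k" by (simp add: S_def fls_nth_sum)
  qed
  then have "T (act R g) $$ n = T S $$ n"
    using triangular_agree[OF triangular_T] by simp
  also have "T S = (\<Sum>j\<in>{a..b}. fls_const (D (pcoeff R j)) * Tpow j g + fls_const (pcoeff R j) * Tpow (j + 1) g)"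
    by (simp add: S_def triangular_sum[OF triangular_T] T_const_mult Tpow_succ)
  also have "\<dots> $$ n = (\<Sum>j\<in>{a..b}. D (pcoeff R j) * ?X j) + (\<Sum>j\<in>{a..b}. pcoeff R j * ?X (j + 1))"
    by (simp add: fls_nth_sum sum.distrib)
  also have "(\<Sum>j\<in>{a..b}. pcoeff R j * ?X (j + 1)) = (\<Sum>j\<in>{a..b}. pcoeff R (j - 1) * ?X j)"
  proof -
    let ?f = "\<lambda>j. pcoeff R j * ?X (j + 1)"
    have "(\<Sum>j\<in>{a..b}. pcoeff R (j - 1) * ?X j) = (\<Sum>j\<in>{a - 1..b - 1}. ?f j)"
      using sum_int_interval_shift[of ?f a b] by simp
    also have "\<dots> = (\<Sum>j\<in>{a - 1..b}. ?f j)"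
      by (rule sum.mono_neutral_left) (auto simp: b_def pcoeff_above_pdeg)
    also have "\<dots> = (\<Sum>j\<in>{a..b}. ?f j)"
      by (rule sum.mono_neutral_right) (auto simp: a_def Tpow_vanishes_below_subdegree)
    finally show ?thesis by simp
  qed
  also have "(\<Sum>j\<in>{a..b}. D (pcoeff R j) * ?X j) + (\<Sum>j\<in>{a..b}. pcoeff R (j - 1) * ?X j)
      = (\<Sum>j\<in>{a..b}. pcoeff (d_mul R) j * ?X j)"
    by (simp add: pcoeff_d_mul distrib_right sum.distrib)
  also have "\<dots> = act (d_mul R) g $$ n"
    by (rule act_nth_interval[symmetric])
       (auto simp: a_def b_def pcoeff_d_mul pcoeff_above_pdeg derivation_zero[OF derivation])
  finally show "T (act R g) $$ n = act (d_mul R) g $$ n" .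
qed

text \<open>The coefficients of \<open>\<partial>\<^sup>i Q\<close>, read off from the product rule defining \<open>pmul\<close>.\<close>

definition dpow_mul_coeff :: "int \<Rightarrow> 'a psido \<Rightarrow> int \<Rightarrow> 'a" where
  "dpow_mul_coeff i Q k = (\<Sum>j\<in>{k - i .. pdeg Q}.
     of_int (ibinom i (nat (i + j - k))) * (D ^^ nat (i + j - k)) (pcoeff Q j))"

definition dpow_mul :: "int \<Rightarrow> 'a psido \<Rightarrow> 'a psido" where
  "dpow_mul i Q = PsiDO (Abs_fls (\<lambda>n. dpow_mul_coeff i Q (- n)))"

lemma dpow_mul_coeff_above: "i + pdeg Q < k \<Longrightarrow> dpow_mul_coeff i Q k = 0"
  by (simp add: dpow_mul_coeff_def)

lemma pcoeff_dpow_mul: "pcoeff (dpow_mul i Q) k = dpow_mul_coeff i Q k"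
proof -
  have "Abs_fls (\<lambda>n. dpow_mul_coeff i Q (- n)) $$ (- k) = dpow_mul_coeff i Q (- (- k))"
    by (rule nth_Abs_fls_lower_bound[where N = "- (i + pdeg Q)"]) (auto simp: dpow_mul_coeff_above)
  then show ?thesis by (simp add: dpow_mul_def)
qed

lemma dpow_mul_0: "dpow_mul 0 Q = Q"
proof (rule psido_eqI)
  fix k
  show "pcoeff (dpow_mul 0 Q) k = pcoeff Q k"
  proof (cases "k \<le> pdeg Q")
    case True
    have "dpow_mul_coeff 0 Q k
        = (\<Sum>j\<in>{k}. of_int (ibinom 0 (nat (0 + j - k))) * (D ^^ nat (0 + j - k)) (pcoeff Q j))"
      unfolding dpow_mul_coeff_def
      by (rule sum.mono_neutral_right) (use True in \<open>auto simp: ibinom_0_left\<close>)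
    then show ?thesis by (simp add: pcoeff_dpow_mul)
  qed (simp add: pcoeff_dpow_mul dpow_mul_coeff_above pcoeff_above_pdeg)
qed

lemma d_mul_dpow_mul: "d_mul (dpow_mul i Q) = dpow_mul (i + 1) Q"
proof (rule psido_eqI)
  fix k
  define a where "a = k - i"
  let ?q = "pcoeff Q"
  let ?t = "\<lambda>c j. of_int c * (D ^^ Suc (nat (j - a))) (?q j)"
  have "dpow_mul_coeff i Q k
      = (\<Sum>j\<in>{a..pdeg Q}. of_int (ibinom i (nat (j - a))) * (D ^^ nat (j - a)) (?q j))"
    by (simp add: dpow_mul_coeff_def a_def algebra_simps)
  moreover have "D ((D ^^ m) x) = (D ^^ Suc m) x" for m x by simp
  ultimately have D_coeff: "D (dpow_mul_coeff i Q k) = (\<Sum>j\<in>{a..pdeg Q}. ?t (ibinom i (nat (j - a))) j)"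
    by (simp add: derivation_sum[OF derivation] derivation_of_int_mult[OF derivation] del: funpow.simps)
  have shifted: "dpow_mul_coeff i' Q k'
      = (\<Sum>j\<in>{a - 1..pdeg Q}. of_int (ibinom i' (nat (j - a + 1))) * (D ^^ nat (j - a + 1)) (?q j))"
    if "k' - i' = a - 1" for i' k'
  proof -
    have exponent: "i' + j - k' = j - a + 1" for j using that by simp
    show ?thesis unfolding dpow_mul_coeff_def using that by (intro sum.cong) (simp_all add: exponent)
  qed
  show "pcoeff (d_mul (dpow_mul i Q)) k = pcoeff (dpow_mul (i + 1) Q) k"
  proof (cases "a - 1 \<le> pdeg Q")
    case False
    then show ?thesis
      by (simp add: pcoeff_d_mul pcoeff_dpow_mul D_coeff shifted a_def derivation_zero[OF derivation])
  next
    case True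
    then have ins: "{a - 1..pdeg Q} = insert (a - 1) {a..pdeg Q}" by auto
    have split: "dpow_mul_coeff i' Q k' = ?q (a - 1) + (\<Sum>j\<in>{a..pdeg Q}. ?t (ibinom i' (Suc (nat (j - a)))) j)"
      if "k' - i' = a - 1" for i' k'
      unfolding shifted[OF that] ins
      by (simp del: funpow.simps) (rule sum.cong, auto simp: Suc_nat_eq_nat_zadd1 add.commute)
    have "k - 1 - i = a - 1" "k - (i + 1) = a - 1" by (simp_all add: a_def)
    with split[where i' = i and k' = "k - 1"] split[where i' = "i + 1" and k' = k] show ?thesis
      unfolding pcoeff_d_mul pcoeff_dpow_mul D_coeff
      by (simp add: ibinom_Suc_Suc distrib_right sum.distrib del: funpow.simps)
  qed
qed

lemma Tpow_act: "Tpow i (act Q g) = act (dpow_mul i Q) g"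
  by (rule T_orbit_unique[where P = "\<lambda>i. Tpow i (act Q g)"])
     (simp_all add: Tpow_succ T_act d_mul_dpow_mul dpow_mul_0)

lemma pcoeff_pmul: "pcoeff (pmul D P Q) k = (\<Sum>i\<in>{k - pdeg Q .. pdeg P}. pcoeff P i * dpow_mul_coeff i Q k)"
proof -
  let ?f = "\<lambda>n. let k = - n in (\<Sum>i \<in> {k - pdeg Q .. pdeg P}. \<Sum>j \<in> {k - i .. pdeg Q}.
        pcoeff P i * of_int (ibinom i (nat (i + j - k))) * (D ^^ nat (i + j - k)) (pcoeff Q j))"
  have "Abs_fls ?f $$ (- k) = ?f (- k)"
    by (rule nth_Abs_fls_lower_bound[where N = "- (pdeg P + pdeg Q)"]) (auto simp: Let_def)
  then show ?thesis
    by (simp add: pmul_def Let_def dpow_mul_coeff_def sum_distrib_left mult.assoc)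
qed

lemma act_pmul: "act (pmul D P Q) g = act P (act Q g)"
proof (rule fls_eqI)
  fix n
  define a where "a = fls_subdegree g - n"
  let ?I = "{a - pdeg Q .. pdeg P}"
  let ?K = "{a .. pdeg P + pdeg Q}"
  let ?X = "\<lambda>k. Tpow k g $$ n"
  have "act P (act Q g) $$ n = (\<Sum>i\<in>?I. pcoeff P i * Tpow i (act Q g) $$ n)"
  proof (rule act_nth_sum)
    fix i assume "i \<notin> ?I"
    then consider "pdeg P < i" | "i < a - pdeg Q" by fastforce
    then show "pcoeff P i * Tpow i (act Q g) $$ n = 0"
    proof cases
      case 2
      have "Tpow i (act Q g) $$ n = 0"
        by (rule Tpow_vanishes_below[of "fls_subdegree g - pdeg Q"])
           (use 2 in \<open>auto simp: a_def act_vanishes_below\<close>)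
      then show ?thesis by simp
    qed (simp add: pcoeff_above_pdeg)
  qed simp
  also have "\<dots> = (\<Sum>i\<in>?I. pcoeff P i * (\<Sum>k\<in>?K. dpow_mul_coeff i Q k * ?X k))"
  proof (rule sum.cong)
    fix i assume "i \<in> ?I"
    then have "act (dpow_mul i Q) g $$ n = (\<Sum>k\<in>?K. pcoeff (dpow_mul i Q) k * ?X k)"
      by (intro act_nth_interval) (auto simp: a_def pcoeff_dpow_mul dpow_mul_coeff_above)
    then show "pcoeff P i * Tpow i (act Q g) $$ n = pcoeff P i * (\<Sum>k\<in>?K. dpow_mul_coeff i Q k * ?X k)"
      by (simp add: Tpow_act pcoeff_dpow_mul)
  qed simp
  also have "\<dots> = (\<Sum>k\<in>?K. (\<Sum>i\<in>?I. pcoeff P i * dpow_mul_coeff i Q k) * ?X k)"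
    by (simp add: sum_distrib_left sum_distrib_right mult.assoc sum.swap[of _ ?I])
  also have "\<dots> = (\<Sum>k\<in>?K. pcoeff (pmul D P Q) k * ?X k)"
  proof (rule sum.cong)
    fix k assume "k \<in> ?K"
    then have "(\<Sum>i\<in>{k - pdeg Q .. pdeg P}. pcoeff P i * dpow_mul_coeff i Q k)
        = (\<Sum>i\<in>?I. pcoeff P i * dpow_mul_coeff i Q k)"
      by (intro sum.mono_neutral_left) (auto simp: dpow_mul_coeff_above)
    then show "(\<Sum>i\<in>?I. pcoeff P i * dpow_mul_coeff i Q k) * ?X k = pcoeff (pmul D P Q) k * ?X k"
      by (simp add: pcoeff_pmul)
  qed simp
  also have "\<dots> = act (pmul D P Q) g $$ n"
    by (rule act_nth_interval[symmetric]) (auto simp: a_def pcoeff_pmul)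
  finally show "act (pmul D P Q) g $$ n = act P (act Q g) $$ n" by simp
qed

end

context kp_lax
begin

lemma act_PsiDO_monomial: "act (PsiDO (fls_shift m 1)) 1 = Tpow m 1"
proof (rule fls_eqI)
  fix n
  have "act (PsiDO (fls_shift m 1)) 1 $$ n = (\<Sum>i\<in>{m}. pcoeff (PsiDO (fls_shift m 1)) i * Tpow i 1 $$ n)"
    by (rule act_nth_sum) auto
  then show "act (PsiDO (fls_shift m 1)) 1 $$ n = Tpow m 1 $$ n" by simp
qed

lemma triangular_act_one: "triangular (\<lambda>p. act (PsiDO p) 1) 0"
  unfolding triangular_def
proof (intro conjI allI impI)
  fix p q :: "'a fls"
  show "act (PsiDO (p + q)) 1 = act (PsiDO p) 1 + act (PsiDO q) 1" by (rule act_PsiDO_add)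
next
  fix p :: "'a fls" assume "p \<noteq> 0"
  show "act (PsiDO p) 1 $$ k = 0" if "k < fls_subdegree p + 0" for k
    using that by (intro act_vanishes_below) simp
  define d where "d = fls_subdegree p"
  have "act (PsiDO p) 1 $$ d = (\<Sum>j\<in>{- d}. pcoeff (PsiDO p) j * Tpow j 1 $$ d)"
  proof (rule act_nth_sum)
    fix j assume "j \<notin> {- d}"
    then consider "j < - d" | "- d < j" by fastforce
    then show "pcoeff (PsiDO p) j * Tpow j 1 $$ d = 0"
      by cases (simp_all add: Tpow_one_below d_def)
  qed simp
  then show "act (PsiDO p) 1 $$ (fls_subdegree p + 0) = p $$ fls_subdegree p"
    using Tpow_one_lead[of "- d"] by (simp add: d_def)
qed

lemma act_one_inj: "act P 1 = act Q 1 \<Longrightarrow> P = Q"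
  by (cases P; cases Q) (use triangular_inj[OF triangular_act_one] in auto)

lemma lax_map_eqI: "act P 1 = f \<Longrightarrow> lax_map D h f = P"
  unfolding lax_map_def lax_expand_eq_act by (rule the_equality) (auto intro: act_one_inj)

lemma act_lax_map: "act (lax_map D h f) 1 = f"
proof -
  obtain p where p: "act (PsiDO p) 1 = f" using triangular_surj[OF triangular_act_one] by blast
  then have "lax_map D h f = PsiDO p" by (rule lax_map_eqI)
  then show ?thesis using p by simp
qed

lemma act_one_nonpositive_eq_0:
  assumes "\<And>n. 0 < n \<Longrightarrow> p $$ n = 0" and "\<And>k. k \<le> 0 \<Longrightarrow> act (PsiDO p) 1 $$ k = 0"
  shows "p = 0"
proof (rule ccontr)
  assume "p \<noteq> 0"
  moreover have "fls_subdegree p \<le> 0"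
    using \<open>p \<noteq> 0\<close> assms(1) by (metis linorder_not_less nth_fls_subdegree_nonzero)
  ultimately show False
    using triangular_lead[OF triangular_act_one \<open>p \<noteq> 0\<close>] assms(2) by simp
qed

lemma act_one_positive_nth_nonpositive:
  assumes "\<And>n. n \<le> 0 \<Longrightarrow> p $$ n = 0" and "k \<le> 0"
  shows "act (PsiDO p) 1 $$ k = 0"
proof -
  have "act (PsiDO p) 1 $$ k = (\<Sum>i\<in>{}. pcoeff (PsiDO p) i * Tpow i 1 $$ k)"
  proof (rule act_nth_sum)
    fix i
    show "pcoeff (PsiDO p) i * Tpow i 1 $$ k = 0"
      using assms(1)[of "- i"] assms(2) Tpow_one_below[of k i] by (cases "0 \<le> i") simp_all
  qed simp
  then show ?thesis by simp
qed

lemma pmul_assoc: "pmul D (pmul D P Q) R = pmul D P (pmul D Q R)"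
  by (rule act_one_inj) (simp add: act_pmul)

lemma pmul_pone_left: "pmul D pone P = P"
  by (rule act_one_inj) (simp add: act_pmul act_pone)

lemma pmul_pone_right: "pmul D P pone = P"
  by (rule act_one_inj) (simp add: act_pmul act_pone)

lemma act_ppow_lax_map_zvar: "act (ppow D (lax_map D h zvar) m) 1 = fls_shift (int m) 1"
proof (induction m)
  case 0
  then show ?case by (simp add: pone_def act_PsiDO_monomial[of 0, simplified])
next
  case (Suc m)
  have "act (lax_map D h zvar) 1 = fls_shift 1 1"
    by (simp add: act_lax_map zvar_def fls_X_inv_conv_shift_1)
  then show ?case by (simp add: act_pmul act_shift Suc.IH add.commute)
qed

end

section \<open>KP currents\<close>

definition kp_symbol :: "nat \<Rightarrow> (nat \<Rightarrow> 'a::comm_ring_1) \<Rightarrow> 'a fls" where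
  "kp_symbol j p = fls_shift (int j) 1 + (\<Sum>l\<in>{0..<j - 1}. fls_const (p l) * fls_shift (int l) 1)"

lemma kp_symbol_nth:
  "kp_symbol j p $$ n = (if n = - int j then 1 else 0) + (\<Sum>l\<in>{0..<j - 1}. if n = - int l then p l else 0)"
  unfolding kp_symbol_def by (auto simp: fls_nth_sum intro!: sum.cong)

lemma kp_symbol_nth_pos: "0 < n \<Longrightarrow> kp_symbol j p $$ n = 0"
  by (simp add: kp_symbol_nth)

lemma kp_symbol_nth_below: "n < - int j \<Longrightarrow> kp_symbol j p $$ n = 0"
  by (auto simp: kp_symbol_nth intro!: sum.neutral)

lemma kp_symbol_nth_lead: "kp_symbol j p $$ (- int j) = 1"
  by (auto simp: kp_symbol_nth intro!: sum.neutral)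

lemma kp_symbol_nth_subleading: "1 \<le> j \<Longrightarrow> kp_symbol j p $$ (1 - int j) = 0"
  by (auto simp: kp_symbol_nth intro!: sum.neutral)

lemma kp_symbol_nth_middle: "l < j - 1 \<Longrightarrow> kp_symbol j p $$ (- int l) = p l"
  by (simp add: kp_symbol_nth)

context kp_lax
begin

lemma act_kp_symbol:
  "act (PsiDO (kp_symbol j p)) 1 = fdb D h (int j) + (\<Sum>l\<in>{0..<j - 1}. fls_const (p l) * fdb D h (int l))"
  by (simp add: kp_symbol_def act_PsiDO_add act_PsiDO_sum act_PsiDO_const_mult act_PsiDO_monomial fdb_eq_Tpow)

lemma lax_symbol_zpow:
  assumes r: "act (PsiDO r) 1 = fls_shift (int j) 1"
  shows "\<And>n. n < - int j \<Longrightarrow> r $$ n = 0" and "r $$ (- int j) = 1"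
    and "1 \<le> j \<Longrightarrow> r $$ (1 - int j) = 0"
proof -
  have "r \<noteq> 0" using r triangular_zero[OF triangular_act_one] by (auto simp: fls_shift_eq0_iff)
  then have sub: "fls_subdegree r = - int j"
    using triangular_subdegree[OF triangular_act_one \<open>r \<noteq> 0\<close>] r by simp
  have lead: "r $$ (- int j) = 1"
    using triangular_lead[OF triangular_act_one \<open>r \<noteq> 0\<close>] r sub by simp
  show "r $$ n = 0" if "n < - int j" for n using that sub by simp
  show "r $$ (- int j) = 1" by (fact lead)
  assume "1 \<le> j"
  have "act (PsiDO r) 1 $$ (1 - int j)
      = (\<Sum>i\<in>{int j - 1, int j}. pcoeff (PsiDO r) i * Tpow i 1 $$ (1 - int j))"
  proof (rule act_nth_sum)
    fix i assume "i \<notin> {int j - 1, int j}"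
    then consider "i < int j - 1" | "int j < i" by fastforce
    then show "pcoeff (PsiDO r) i * Tpow i 1 $$ (1 - int j) = 0"
      by cases (simp_all add: Tpow_one_below sub)
  qed simp
  also have "\<dots> = r $$ (1 - int j)"
    using Tpow_one_lead[of "int j - 1"] Tpow_one_subleading[of j] lead by simp
  finally show "r $$ (1 - int j) = 0" using r \<open>1 \<le> j\<close> by simp
qed

lemma kp_current_condition_iff:
  "((\<exists>p. H = fdb D h (int j) + (\<Sum>l = 0 ..< j - 1. fls_const (p l) * fdb D h (int l)))
      \<and> zcoeff H (int j) = 1 \<and> (\<forall>k. 0 \<le> k \<and> k \<noteq> int j \<longrightarrow> zcoeff H k = 0))
   \<longleftrightarrow> (\<exists>p. H = act (PsiDO (kp_symbol j p)) 1)
       \<and> (\<forall>k\<le>0. H $$ k = (if k = - int j then 1 else 0))"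
proof -
  have "(zcoeff H (int j) = 1 \<and> (\<forall>k. 0 \<le> k \<and> k \<noteq> int j \<longrightarrow> zcoeff H k = 0))
      \<longleftrightarrow> (\<forall>k\<le>0. H $$ k = (if k = - int j then 1 else 0))"
    unfolding zcoeff_def
  proof safe
    fix k :: int assume "\<forall>k. 0 \<le> k \<and> k \<noteq> int j \<longrightarrow> H $$ - k = 0" "k \<le> 0"
    then show "H $$ - int j = 1 \<Longrightarrow> H $$ k = (if k = - int j then 1 else 0)"
      by (cases "k = - int j") (auto dest: spec[of _ "- k"])
  qed (auto dest: spec[of _ "- int j"] spec[of _ "- _"])
  then show ?thesis by (simp add: act_kp_symbol)
qed

lemma kp_symbol_exists: "\<exists>p. \<forall>k\<le>0. act (PsiDO (kp_symbol j p)) 1 $$ k = (if k = - int j then 1 else 0)"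
proof -
  obtain r where r: "act (PsiDO r) 1 = fls_shift (int j) 1"
    using triangular_surj[OF triangular_act_one] by blast
  define x where "x = kp_symbol j (\<lambda>l. r $$ (- int l))"
  have "x $$ n = r $$ n" if "n \<le> 0" for n
  proof -
    consider "n < - int j" | "n = - int j" | "n = 1 - int j" "1 \<le> j"
      | "n = - int (nat (- n))" "nat (- n) < j - 1"
      using \<open>n \<le> 0\<close> by linarith
    then show ?thesis
    proof cases
      case 4
      then show ?thesis using kp_symbol_nth_middle[OF 4(2)] unfolding x_def by metis
    qed (simp_all add: x_def kp_symbol_nth_lead kp_symbol_nth_below kp_symbol_nth_subleading
            lax_symbol_zpow[OF r])
  qed
  then have "act (PsiDO (r - x)) 1 $$ k = 0" if "k \<le> 0" for k
    using that by (intro act_one_positive_nth_nonpositive) simp_all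
  then have "act (PsiDO x) 1 $$ k = act (PsiDO r) 1 $$ k" if "k \<le> 0" for k
    using that triangular_diff[OF triangular_act_one, of r x] by simp
  then have "act (PsiDO x) 1 $$ k = (if k = - int j then 1 else 0)" if "k \<le> 0" for k
    using that r by auto
  then show ?thesis unfolding x_def by blast
qed

lemma kp_current_eq: "\<exists>p. kp_current D h j = act (PsiDO (kp_symbol j p)) 1"
proof -
  obtain p where p: "\<forall>k\<le>0. act (PsiDO (kp_symbol j p)) 1 $$ k = (if k = - int j then 1 else 0)"
    using kp_symbol_exists by blast
  have "kp_current D h j = act (PsiDO (kp_symbol j p)) 1"
    unfolding kp_current_def kp_current_condition_iff
  proof (rule the_equality)
    fix H
    assume H: "(\<exists>p. H = act (PsiDO (kp_symbol j p)) 1)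
      \<and> (\<forall>k\<le>0. H $$ k = (if k = - int j then 1 else 0))"
    then obtain p' where p': "H = act (PsiDO (kp_symbol j p')) 1" by blast
    have "kp_symbol j p' - kp_symbol j p = 0"
    proof (rule act_one_nonpositive_eq_0)
      show "(kp_symbol j p' - kp_symbol j p) $$ n = 0" if "0 < n" for n
        using that by (simp add: kp_symbol_nth_pos)
      show "act (PsiDO (kp_symbol j p' - kp_symbol j p)) 1 $$ k = 0" if "k \<le> 0" for k
        using that H p p' by (simp add: triangular_diff[OF triangular_act_one])
    qed
    then show "H = act (PsiDO (kp_symbol j p)) 1" using p' by simp
  qed (use p in blast)
  then show ?thesis by blast
qed

end

section \<open>Monic differential operators\<close>

lemma monic_diff_kp_combination:
  assumes "- 1 \<le> l"
  shows "monic_diff (PsiDO (kp_symbol (nat (l + 1)) p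
           + (\<Sum>m\<in>{0..l}. fls_const (c m) * kp_symbol (nat (l - m)) (q m)))) (l + 1)"
  unfolding monic_diff_def
proof (intro conjI allI impI)
  have "kp_symbol (nat (l - m)) (q m) $$ (- (l + 1)) = 0" if "m \<in> {0..l}" for m
    using kp_symbol_nth_below[of "- (l + 1)" "nat (l - m)"] that by simp
  then show "pcoeff (PsiDO (kp_symbol (nat (l + 1)) p
      + (\<Sum>m\<in>{0..l}. fls_const (c m) * kp_symbol (nat (l - m)) (q m)))) (l + 1) = 1"
    using kp_symbol_nth_lead[of "nat (l + 1)" p] assms by (simp add: fls_nth_sum)
next
  fix k assume k: "k < 0 \<or> l + 1 < k"
  have vanish: "kp_symbol (nat j) r $$ (- k) = 0" if "j \<le> l + 1" "0 \<le> j" for j r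
    using k that kp_symbol_nth_pos[of "- k" "nat j" r] kp_symbol_nth_below[of "- k" "nat j" r] by auto
  then have "kp_symbol (nat (l - m)) (q m) $$ (- k) = 0" if "m \<in> {0..l}" for m
    using that vanish[of "l - m" "q m"] by simp
  then show "pcoeff (PsiDO (kp_symbol (nat (l + 1)) p
      + (\<Sum>m\<in>{0..l}. fls_const (c m) * kp_symbol (nat (l - m)) (q m)))) k = 0"
    using vanish[of "l + 1" p] assms by (simp add: fls_nth_sum)
qed

context kp_lax
begin

lemma monic_diff_lax_map_Sseries:
  assumes "- 1 \<le> l"
  shows "monic_diff (lax_map D h (Sseries D h a l)) (l + 1)"
proof -
  obtain p where p: "\<And>j. kp_current D h j = act (PsiDO (kp_symbol j (p j))) 1"
    using kp_current_eq by metis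
  let ?x = "kp_symbol (nat (l + 1)) (p (nat (l + 1)))
    + (\<Sum>m\<in>{0..l}. fls_const (zcoeff a (- m)) * kp_symbol (nat (l - m)) (p (nat (l - m))))"
  have "act (PsiDO ?x) 1 = Sseries D h a l"
    by (simp add: Sseries_def p act_PsiDO_add act_PsiDO_sum act_PsiDO_const_mult)
  then have "lax_map D h (Sseries D h a l) = PsiDO ?x" by (rule lax_map_eqI)
  then show ?thesis using monic_diff_kp_combination[OF assms] by simp
qed

lemma triangular_act_monic_diff:
  assumes "monic_diff P d"
  shows "triangular (act P) (- d)"
  unfolding triangular_def
proof (intro conjI allI impI)
  fix f g
  show "act P (f + g) = act P f + act P g" by (rule act_add)
next
  fix g :: "'a fls" assume "g \<noteq> 0"
  have lowest: "act P g $$ k = Tpow d g $$ k" if "k \<le> fls_subdegree g + - d" for k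
  proof -
    have "act P g $$ k = (\<Sum>j\<in>{d}. pcoeff P j * Tpow j g $$ k)"
    proof (rule act_nth_sum)
      fix j assume "j \<notin> {d}"
      then consider "j < d" | "d < j" by fastforce
      then show "pcoeff P j * Tpow j g $$ k = 0"
        by cases (use assms that Tpow_vanishes_below_subdegree[of k g j] in \<open>auto simp: monic_diff_def\<close>)
    qed simp
    then show ?thesis using assms by (simp add: monic_diff_def)
  qed
  show "act P g $$ k = 0" if "k < fls_subdegree g + - d" for k
    using lowest[of k] that triangular_below[OF triangular_Tpow \<open>g \<noteq> 0\<close>, of k d] by simp
  show "act P g $$ (fls_subdegree g + - d) = g $$ fls_subdegree g"
    using lowest triangular_lead[OF triangular_Tpow \<open>g \<noteq> 0\<close>, of d] by simp
qed

lemma pmul_pinv_monic_diff: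
  assumes "monic_diff P d"
  shows "pmul D (pinv D P) P = pone"
proof -
  note tri = triangular_act_monic_diff[OF assms]
  obtain v where "act P v = 1" using triangular_surj[OF tri] by blast
  define Q where "Q = lax_map D h v"
  have right: "pmul D P Q = pone"
    by (rule act_one_inj) (simp add: Q_def act_pmul act_lax_map \<open>act P v = 1\<close> act_pone)
  have "act P (act (pmul D Q P) 1) = act (pmul D (pmul D P Q) P) 1"
    by (simp add: act_pmul)
  also have "\<dots> = act P (act pone 1)"
    by (simp add: right pmul_pone_left act_pone)
  finally have "act P (act (pmul D Q P) 1) = act P (act pone 1)" .
  then have left: "pmul D Q P = pone"
    using triangular_inj[OF tri] act_one_inj by blast
  have "pinv D P = Q"
    unfolding pinv_def
  proof (rule the_equality)
    fix Q' assume "pmul D P Q' = pone \<and> pmul D Q' P = pone"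
    then have "pmul D Q' P = pone" by simp
    have "Q' = pmul D Q' (pmul D P Q)" by (simp add: right pmul_pone_right)
    also have "\<dots> = pmul D (pmul D Q' P) Q" by (simp add: pmul_assoc)
    finally show "Q' = Q" by (simp add: \<open>pmul D Q' P = pone\<close> pmul_pone_left)
  qed (use left right in simp)
  then show ?thesis using left by simp
qed

end

lemma zpow_mult: "zpow k * f = fls_shift k (f :: 'a::comm_ring_1 fls)"
  unfolding zpow_def using fls_shifted_times_simps(2)[of "- (- k)" 1 f] by (simp add: fls_mult_one)

lemma Sseries_shift:
  assumes "inS D l h a" and "inS D (l + int n) h a"
  shows "Sseries D h a (l + int n) = fls_shift (int n) (Sseries D h a l)"
proof -
  have "Sseries D h a l = fls_shift l a" "Sseries D h a (l + int n) = fls_shift (l + int n) a"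
    using assms by (simp_all add: inS_def zpow_mult)
  then show ?thesis by (simp add: add.commute)
qed

theorem mainTheorem3:
  fixes D :: "'a::{comm_ring_1, ring_char_0} \<Rightarrow> 'a"
    and h a :: "'a fls" and l :: int and n :: nat
  assumes "derivation D"
    and "-1 \<le> l" and "1 \<le> n"
    and "inS D l h a" and "inS D (l + int n) h a"
  shows "monic_diff (lax_map D h (Sseries D h a l)) (l + 1)
    \<and> monic_diff (lax_map D h (Sseries D h a (l + int n))) (l + int n + 1)
    \<and> ppow D (lax_map D h zvar) n
        = pmul D (pinv D (lax_map D h (Sseries D h a l))) (lax_map D h (Sseries D h a (l + int n)))"
proof -
  interpret kp_lax D h
    using assms by unfold_locales (simp_all add: inS_def)
  let ?L1 = "lax_map D h (Sseries D h a l)" and ?L2 = "lax_map D h (Sseries D h a (l + int n))"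
  let ?Ln = "ppow D (lax_map D h zvar) n"
  have monic: "monic_diff ?L1 (l + 1)" "monic_diff ?L2 (l + int n + 1)"
    using monic_diff_lax_map_Sseries[of l] monic_diff_lax_map_Sseries[of "l + int n"] \<open>-1 \<le> l\<close>
    by simp_all
  have factor: "pmul D ?L1 ?Ln = ?L2"
    by (rule act_one_inj)
       (simp add: act_pmul act_ppow_lax_map_zvar act_shift act_lax_map Sseries_shift[OF assms(4,5)])
  have "?Ln = pmul D (pmul D (pinv D ?L1) ?L1) ?Ln"
    by (simp add: pmul_pinv_monic_diff[OF monic(1)] pmul_pone_left)
  also have "\<dots> = pmul D (pinv D ?L1) ?L2"
    by (simp add: pmul_assoc factor)
  finally show ?thesis using monic by simp
qed

end
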